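(* In the cloud-side decompression procedure described in the context, the computational cost of the transformations the cloud applies to recover a stored string $F'$ of length $n_b$ is $O(N_B + n_b\cdot N)$, where $N_B$ is the number of stored bases and $N$ is the alphabet size.
   Context: The cloud stores, for each received string $F'$ of length $n_b$ over the alphabet $\Sigma=\{0,1\}^k$ of size $N$, a record consisting of a file identifier, a pointer to a base $B$ (a sorted string of bracket IDs) kept in a set of $N_B$ bases, a string describing swaps (a bitmap of marked positions together with an array of partner positions) that transform the unsorted bracket-ID string into $B$, a string of symbol IDs, and a string of zone value IDs. Symbols are arranged in a fixed "brackets table" of four zones, where each symbol is identified by its bracket ID (column), symbol ID (row code) and the value ID of its zone. Decompression of a requested identifier proceeds as follows: (1) locate the record and retrieve its base $B$ by searching over the stored bases using the identifier; (2) read the swap information and perform the recorded swaps in reverse to recover the unsorted bracket-ID string; (3) for each position, recover the symbol from its triple (bracket ID, symbol ID, value ID) by scanning the brackets table; this yields $F'$, which is returned. *)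

theory Defs
  imports Main
begin

text \<open>Every function returns its result together with the number of elementary
  steps (comparisons / swaps / table-entry inspections) it performs.\<close>

text \<open>The alphabet Sigma = {0,1}^k, of size N = 2^k.\<close>
definition sigma :: "nat \<Rightarrow> bool list set" where
  "sigma k = {xs. length xs = k}"

text \<open>A brackets-table entry: (bracket ID, symbol ID, value ID, symbol).\<close>
type_synonym entry = "nat \<times> nat \<times> nat \<times> bool list"

definition entry_sym :: "entry \<Rightarrow> bool list" where
  "entry_sym e = snd (snd (snd e))"

record crecord =
  fid :: nat
  bitmap :: "bool list"
  partners :: "nat list"
  symids :: "nat list"
  valids :: "nat list"

fun find_base :: "(nat \<times> nat list) list \<Rightarrow> nat \<Rightarrow> nat list option \<times> nat" where
  "find_base [] i = (None, 0)"
| "find_base ((j, B) # bs) i =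
     (if j = i then (Some B, 1)
      else (let (r, c) = find_base bs i in (r, Suc c)))"

text \<open>The marked positions
  of the bitmap are paired (in order) with the partner array; the swaps were
  performed left to right, hence are undone right to left (foldr).\<close>
definition swap_list :: "'a list \<Rightarrow> nat \<Rightarrow> nat \<Rightarrow> 'a list" where
  "swap_list xs i j = xs[i := xs ! j, j := xs ! i]"

definition undo_swaps :: "bool list \<Rightarrow> nat list \<Rightarrow> nat list \<Rightarrow> nat list \<times> nat" where
  "undo_swaps bm ps B =
     (let marked = filter (\<lambda>i. bm ! i) [0..<length bm];
          prs = zip marked ps
      in (foldr (\<lambda>(i, j) xs. swap_list xs i j) prs B, length bm + length prs))"

fun table_lookup :: "entry list \<Rightarrow> nat \<times> nat \<times> nat \<Rightarrow> bool list option \<times> nat" where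
  "table_lookup [] t = (None, 0)"
| "table_lookup ((b, s, v, x) # es) t =
     (if (b, s, v) = t then (Some x, 1)
      else (let (r, c) = table_lookup es t in (r, Suc c)))"

fun lookup_all :: "entry list \<Rightarrow> (nat \<times> nat \<times> nat) list \<Rightarrow> bool list list option \<times> nat" where
  "lookup_all tbl [] = (Some [], 0)"
| "lookup_all tbl (t # ts) =
     (let (r, c) = table_lookup tbl t;
          (rs, c') = lookup_all tbl ts
      in (case (r, rs) of (Some x, Some xs) \<Rightarrow> Some (x # xs) | _ \<Rightarrow> None, c + c'))"

definition decompress ::
  "(nat \<times> nat list) list \<Rightarrow> entry list \<Rightarrow> crecord \<Rightarrow> bool list list option \<times> nat" where
  "decompress bases tbl r =
     (case find_base bases (fid r) of
        (None, c1) \<Rightarrow> (None, c1)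
      | (Some B, c1) \<Rightarrow>
          (let (U, c2) = undo_swaps (bitmap r) (partners r) B;
               (F, c3) = lookup_all tbl (zip U (zip (symids r) (valids r)))
           in (F, c1 + c2 + c3)))"

end

theory Submission
  imports Defs
begin

text \<open>Each of the three phases is a linear scan: the search for the base costs at most
  one step per stored base, undoing the swaps at most two steps per bitmap position, and
  each of the at most \<open>n_b\<close> table lookups at most one step per table entry.  Since the
  table lists every symbol of \<open>{0,1}\<^sup>k\<close> exactly once, it has \<open>N = 2\<^sup>k \<ge> 1\<close> entries, so the
  swap cost \<open>2 n_b\<close> is absorbed into \<open>n_b N\<close>.\<close>

lemma find_base_cost_le: "snd (find_base bs i) \<le> length bs"
  by (induction bs i rule: find_base.induct) (auto simp: split_beta)

lemma table_lookup_cost_le: "snd (table_lookup es t) \<le> length es"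
  by (induction es t rule: table_lookup.induct) (auto simp: split_beta)

lemma lookup_all_cost_le: "snd (lookup_all tbl ts) \<le> length ts * length tbl"
proof (induction tbl ts rule: lookup_all.induct)
  case (2 tbl t ts)
  have "snd (lookup_all tbl ts) \<le> length ts * length tbl"
    using "2.IH"[OF refl prod.collapse] .
  with table_lookup_cost_le[of tbl t] show ?case by (auto simp: split_beta)
qed simp

lemma undo_swaps_cost_le: "snd (undo_swaps bm ps B) \<le> 2 * length bm"
  using length_filter_le[of "\<lambda>i. bm ! i" "[0..<length bm]"]
  by (auto simp: undo_swaps_def Let_def)

lemma decompress_cost_le:
  "snd (decompress bases tbl r)
     \<le> length bases + 2 * length (bitmap r) + length (symids r) * length tbl"
proof -
  obtain res c1 where base: "find_base bases (fid r) = (res, c1)" by fastforce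
  have c1: "c1 \<le> length bases" using find_base_cost_le[of bases "fid r"] base by simp
  show ?thesis
  proof (cases res)
    case None
    then show ?thesis using base c1 by (simp add: decompress_def)
  next
    case (Some B)
    obtain U c2 where undo: "undo_swaps (bitmap r) (partners r) B = (U, c2)" by fastforce
    have c2: "c2 \<le> 2 * length (bitmap r)"
      using undo_swaps_cost_le[of "bitmap r" "partners r" B] undo by simp
    define ts where "ts = zip U (zip (symids r) (valids r))"
    obtain F c3 where lookup: "lookup_all tbl ts = (F, c3)" by fastforce
    have "c3 \<le> length ts * length tbl"
      using lookup_all_cost_le[of tbl ts] lookup by simp
    also have "\<dots> \<le> length (symids r) * length tbl" by (simp add: ts_def min.coboundedI2)
    finally have c3: "c3 \<le> length (symids r) * length tbl" .
    have "snd (decompress bases tbl r) = c1 + c2 + c3"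
      using base Some undo lookup by (simp add: decompress_def ts_def)
    with c1 c2 c3 show ?thesis by linarith
  qed
qed

lemma card_sigma: "card (sigma k) = 2 ^ k"
  using card_lists_length_eq[of "UNIV :: bool set" k] by (simp add: sigma_def)

lemma length_table_eq_card_sigma:
  assumes "distinct (map entry_sym tbl)" and "set (map entry_sym tbl) = sigma k"
  shows "length tbl = card (sigma k)"
  using distinct_card[OF assms(1)] assms(2) by simp

theorem theorem4:
  "\<exists>C::nat. \<forall>(k::nat) (bases :: (nat \<times> nat list) list) (tbl :: entry list)
       (r :: crecord) (n_b :: nat).
     distinct (map entry_sym tbl) \<longrightarrow> set (map entry_sym tbl) = sigma k \<longrightarrow>
     length (bitmap r) = n_b \<longrightarrow> length (symids r) = n_b \<longrightarrow>
     length (valids r) = n_b \<longrightarrow> length (partners r) \<le> n_b \<longrightarrow>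
     snd (decompress bases tbl r) \<le> C * (length bases + n_b * card (sigma k))"
proof (intro exI[of _ 3] allI impI)
  fix k bases tbl and r :: crecord and n_b
  assume "distinct (map entry_sym tbl)" and "set (map entry_sym tbl) = sigma k"
    and "length (bitmap r) = n_b" and "length (symids r) = n_b"
  then have "snd (decompress bases tbl r) \<le> length bases + 2 * n_b + n_b * 2 ^ k"
    using decompress_cost_le[of bases tbl r] length_table_eq_card_sigma card_sigma by simp
  also have "\<dots> \<le> 3 * (length bases + n_b * 2 ^ k)"
  proof -
    have "n_b \<le> n_b * 2 ^ k" by simp
    then show ?thesis unfolding distrib_left by linarith
  qed
  finally show "snd (decompress bases tbl r) \<le> 3 * (length bases + n_b * card (sigma k))"
    by (simp add: card_sigma)
qed

end
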